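(* Let $n\geq1$, let $H$ be an irreducible subgroup of $SL(n,\mathbb{C})$ and let $u\in U_n(H)$. Then $\mathrm{Tr}(u)=0$ if $u\notin\langle \xi I_n\rangle$, and $\mathrm{Tr}(u)=n\xi^k$ if $u=\xi^kI_n$ with $k\in\mathbb{Z}/n$.
   Context: Let $\xi=e^{2\pi i/n}$; the center of $SL(n,\mathbb{C})$ is $\langle \xi I_n\rangle$. $\pi_n:SL(n,\mathbb{C})\to PSL(n,\mathbb{C})$ is the quotient map. A subgroup $H\le SL(n,\mathbb{C})$ is irreducible if no nonzero proper subspace of $\mathbb{C}^n$ is $H$-invariant. $U_n(H)=\{g\in SL(n,\mathbb{C}) : ghg^{-1}h^{-1}\in\langle\xi I_n\rangle \text{ for all } h\in H\}$, the preimage under $\pi_n$ of the centralizer of $\pi_n(H)$ in $PSL(n,\mathbb{C})$. *)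

theory Defs
  imports "HOL-Analysis.Analysis"
begin

definition xi :: "'n::finite itself \<Rightarrow> complex" where
  "xi _ = exp (2 * pi * \<i> / of_nat CARD('n))"

definition SL :: "(complex^'n^'n) set" where
  "SL = {A. det A = 1}"

definition centre_SL :: "(complex^'n::finite^'n) set" where
  "centre_SL = {mat (xi TYPE('n) ^ k) | k::nat. True}"

definition is_subgroup_SL :: "(complex^'n::finite^'n) set \<Rightarrow> bool" where
  "is_subgroup_SL H \<longleftrightarrow> H \<subseteq> SL \<and> mat 1 \<in> H \<and>
     (\<forall>A\<in>H. \<forall>B\<in>H. A ** B \<in> H) \<and> (\<forall>A\<in>H. matrix_inv A \<in> H)"

definition irreducible_SL :: "(complex^'n::finite^'n) set \<Rightarrow> bool" where
  "irreducible_SL H \<longleftrightarrow>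
     \<not> (\<exists>W. vec.subspace W \<and> W \<noteq> {0} \<and> W \<noteq> UNIV \<and> (\<forall>h\<in>H. (\<lambda>v. h *v v) ` W \<subseteq> W))"

definition U_n :: "(complex^'n::finite^'n) set \<Rightarrow> (complex^'n^'n) set" where
  "U_n H = {g \<in> SL. \<forall>h\<in>H. g ** h ** matrix_inv g ** matrix_inv h \<in> centre_SL}"

end

theory Submission
  imports Defs "HOL-Computational_Algebra.Fundamental_Theorem_Algebra"
begin

text \<open>
  By Schur's lemma an element commuting with the irreducible group \<open>H\<close> is scalar, and a scalar
  of determinant 1 is central. So if \<open>u\<close> is not central, some \<open>h \<in> H\<close> satisfies
  \<open>u h = c h u\<close> with a scalar \<open>c \<noteq> 1\<close> (the commutator of \<open>u\<close> and \<open>h\<close>). Then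
  \<open>u = c h u h\<^sup>-\<^sup>1\<close>, whence \<open>tr u = c tr u\<close> and \<open>tr u = 0\<close>.
\<close>

lemma matrix_inv_right:
  assumes "invertible (A :: 'a::semiring_1^'n^'m)"
  shows "A ** matrix_inv A = mat 1"
  using someI_ex[OF assms[unfolded invertible_def]] unfolding matrix_inv_def by blast

lemma matrix_inv_left:
  assumes "invertible (A :: 'a::semiring_1^'n^'m)"
  shows "matrix_inv A ** A = mat 1"
  using someI_ex[OF assms[unfolded invertible_def]] unfolding matrix_inv_def by blast

lemma matrix_vector_mult_mat: "mat c *v v = c *s (v :: 'a::semiring_1^'n)"
  by (simp add: vec_eq_iff matrix_vector_mult_def mat_def if_distrib[of "\<lambda>x. x * _"] cong: if_cong)

lemma trace_mat: "trace (mat c :: 'a::semiring_1^'n^'n) = of_nat CARD('n) * c"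
  by (simp add: trace_def mat_def)

lemma trace_mat_mult: "trace (mat c ** (A :: 'a::comm_semiring_1^'n^'n)) = c * trace A"
  by (simp add: trace_def matrix_matrix_mult_def mat_def sum_distrib_left
      if_distrib[of "\<lambda>x. x * _"] cong: if_cong)

lemma det_mat: "det (mat c :: 'a::comm_ring_1^'n^'n) = c ^ CARD('n)"
  by (simp add: det_diagonal mat_def)

definition charpoly :: "'a::comm_ring_1^'n^'n \<Rightarrow> 'a poly" where
  "charpoly A = det (\<chi> i j. if i = j then [:- A$i$j, 1:] else [:- A$i$j:])"

lemma poly_charpoly: "poly (charpoly A) x = det (mat x - A)"
proof -
  have "poly (if i = j then [:- A$i$j, 1:] else [:- A$i$j:]) x = (mat x - A)$i$j" for i j
    by (simp add: mat_def)
  then show ?thesis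
    unfolding charpoly_def det_def by (simp add: poly_sum poly_prod)
qed

lemma degree_prod_charpoly_entries_less:
  fixes A :: "'a::comm_ring_1^'n^'n"
  assumes "p \<noteq> id"
  shows "degree (\<Prod>i\<in>UNIV. (if i = p i then [:- A$i$p i, 1:] else [:- A$i$p i:])) < CARD('n)"
proof -
  from assms obtain i0 where i0: "p i0 \<noteq> i0" by (auto simp: fun_eq_iff)
  have "degree (\<Prod>i\<in>UNIV. (if i = p i then [:- A$i$p i, 1:] else [:- A$i$p i:]))
        \<le> (\<Sum>i\<in>UNIV. if p i = i then 1 else 0)"
    using degree_prod_sum_le[of UNIV "\<lambda>i. if i = p i then [:- A$i$p i, 1:] else [:- A$i$p i:]"]
    by (auto simp: o_def intro: order.trans[OF _ sum_mono])
  also have "\<dots> = (\<Sum>i\<in>UNIV - {i0}. if p i = i then 1 else 0)"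
    using i0 by (subst sum.remove[of _ i0]) auto
  also have "\<dots> \<le> card (UNIV - {i0})"
    using sum_bounded_above[of "UNIV - {i0}" "\<lambda>i. if p i = i then 1 else 0::nat" 1] by auto
  also have "\<dots> < CARD('n)"
    by (simp add: card_Diff_singleton)
  finally show ?thesis .
qed

text \<open>Only the diagonal term contributes to the coefficient of degree \<open>n\<close>.\<close>
lemma coeff_charpoly_CARD: "coeff (charpoly (A :: 'a::idom^'n^'n)) CARD('n) = 1"
proof -
  let ?P = "\<chi> i j. if i = j then [:- A$i$j, 1:] else [:- A$i$j:]"
  let ?term = "\<lambda>p. of_int (sign p) * (\<Prod>i\<in>UNIV. ?P$i$p i)"
  have "coeff (?term p) CARD('n) = 0" if "p \<noteq> id" for p
    using degree_mult_le[of "of_int (sign p)"] degree_prod_charpoly_entries_less[OF that, of A]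
    by (intro coeff_eq_0) (auto intro: le_less_trans)
  then have "coeff (charpoly A) CARD('n) = (\<Sum>p\<in>{id}. coeff (?term p) CARD('n))"
    unfolding charpoly_def det_def coeff_sum
    by (intro sum.mono_neutral_right) (auto simp: finite_permutations permutes_id)
  also have "\<dots> = lead_coeff (\<Prod>i\<in>UNIV. [:- A$i$i, 1:])"
    using degree_prod_eq_sum_degree[of UNIV "\<lambda>i. [:- A$i$i, 1:]"] by (simp add: sign_id)
  also have "\<dots> = 1"
    by (simp add: lead_coeff_prod)
  finally show ?thesis .
qed

lemma exists_eigenvector: "\<exists>c v. v \<noteq> 0 \<and> (A :: complex^'n^'n) *v v = c *s v"
proof -
  have "CARD('n) \<le> degree (charpoly A)"
    by (rule le_degree) (simp add: coeff_charpoly_CARD)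
  then have "degree (charpoly A) \<noteq> 0"
    using zero_less_card_finite[where 'a='n] by linarith
  then obtain c where "poly (charpoly A) c = 0"
    using fundamental_theorem_of_algebra by (auto simp: constant_degree)
  then have "\<not> invertible (mat c - A)"
    by (simp add: poly_charpoly invertible_det_nz)
  then obtain v where "v \<noteq> 0" "(mat c - A) *v v = 0"
    by (auto simp: invertible_left_inverse matrix_left_invertible_ker)
  then show ?thesis
    by (metis eq_iff_diff_eq_0 matrix_vector_mult_diff_rdistrib matrix_vector_mult_mat)
qed

lemma irreducible_SL_commuting_scalar:
  fixes H :: "(complex^'n^'n) set"
  assumes "irreducible_SL H" and "\<forall>h\<in>H. u ** h = h ** u"
  shows "\<exists>c. u = mat c"
proof -
  obtain c v where "v \<noteq> 0" "u *v v = c *s v"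
    using exists_eigenvector by blast
  define W where "W = {w. u *v w = c *s w}"
  have "vec.subspace W"
    unfolding vec.subspace_def W_def
    by (simp add: matrix_vector_right_distrib vector_scalar_commute vector_add_ldistrib
        scalar_mult_eq_scaleR[symmetric] algebra_simps)
  moreover have "W \<noteq> {0}"
    using \<open>v \<noteq> 0\<close> \<open>u *v v = c *s v\<close> by (auto simp: W_def)
  moreover have "(\<lambda>w. h *v w) ` W \<subseteq> W" if "h \<in> H" for h
  proof
    fix y assume "y \<in> (\<lambda>w. h *v w) ` W"
    then obtain w where "w \<in> W" "y = h *v w" by blast
    have "u *v (h *v w) = (h ** u) *v w"
      using assms(2) \<open>h \<in> H\<close> by (simp add: matrix_vector_mul_assoc)
    also have "\<dots> = c *s (h *v w)"
      using \<open>w \<in> W\<close> by (simp add: W_def vector_scalar_commute flip: matrix_vector_mul_assoc)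
    finally show "y \<in> W"
      using \<open>y = h *v w\<close> by (simp add: W_def)
  qed
  ultimately have "W = UNIV"
    using assms(1) unfolding irreducible_SL_def by blast
  then show ?thesis
    by (auto simp: W_def matrix_vector_mult_mat matrix_eq)
qed

lemma mat_in_centre_SL:
  assumes "det (mat c :: complex^'n^'n) = 1"
  shows "(mat c :: complex^'n^'n) \<in> centre_SL"
proof -
  have "c ^ CARD('n) = 1"
    using assms by (simp add: det_mat)
  then obtain j where "c = exp (2 * of_real pi * \<i> * of_nat j / of_nat CARD('n))"
    using complex_roots_unity[of "CARD('n)"] by (auto simp: Suc_le_eq)
  then have "c = xi TYPE('n) ^ j"
    by (simp add: xi_def field_simps flip: exp_of_nat_mult)
  then show ?thesis
    unfolding centre_SL_def by blast
qed

lemma irreducible_SL_noncentral_not_commuting: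
  fixes H :: "(complex^'n^'n) set"
  assumes "irreducible_SL H" "det u = 1" "u \<notin> centre_SL"
  shows "\<exists>h\<in>H. u ** h \<noteq> h ** u"
proof (rule ccontr)
  assume "\<not> (\<exists>h\<in>H. u ** h \<noteq> h ** u)"
  then obtain c where "u = mat c"
    using irreducible_SL_commuting_scalar[OF assms(1)] by blast
  with assms(2,3) show False
    using mat_in_centre_SL by blast
qed

lemma matrix_mul_cancel_matrix_inv_right:
  fixes A B :: "'a::semiring_1^'n^'n"
  assumes "invertible B"
  shows "A ** B ** matrix_inv B = A"
  by (simp add: matrix_inv_right[OF assms] flip: matrix_mul_assoc)

lemma matrix_mul_cancel_matrix_inv_left:
  fixes A B :: "'a::semiring_1^'n^'n"
  assumes "invertible B"
  shows "A ** matrix_inv B ** B = A"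
  by (simp add: matrix_inv_left[OF assms] flip: matrix_mul_assoc)

lemma commute_up_to_scalar_if_commutator:
  fixes u h :: "'a::semiring_1^'n^'n"
  assumes "invertible u" "invertible h" "u ** h ** matrix_inv u ** matrix_inv h = mat c"
  shows "u ** h = mat c ** h ** u"
proof -
  have "mat c ** h ** u = u ** h ** matrix_inv u ** matrix_inv h ** h ** u"
    by (simp only: assms(3))
  also have "\<dots> = u ** h"
    by (simp only: matrix_mul_cancel_matrix_inv_left assms(1,2))
  finally show ?thesis
    by (rule sym)
qed

lemma trace_eq_0_if_commute_up_to_scalar:
  fixes u h :: "'a::field^'n^'n"
  assumes "invertible h" "u ** h = mat c ** h ** u" "c \<noteq> 1"
  shows "trace u = 0"
proof -
  have "u = mat c ** h ** u ** matrix_inv h"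
    by (simp only: matrix_mul_cancel_matrix_inv_right assms(1) flip: assms(2))
  then have "trace u = trace (mat c ** h ** u ** matrix_inv h)"
    by (rule arg_cong)
  also have "\<dots> = c * trace (h ** u ** matrix_inv h)"
    by (simp only: trace_mat_mult flip: matrix_mul_assoc)
  also have "\<dots> = c * trace (matrix_inv h ** h ** u)"
    by (simp only: trace_mul_sym[of "h ** u"] matrix_mul_assoc)
  also have "\<dots> = c * trace u"
    by (simp only: matrix_inv_left[OF assms(1)] matrix_mul_lid)
  finally have "(1 - c) * trace u = 0"
    by (simp add: algebra_simps)
  with \<open>c \<noteq> 1\<close> show ?thesis
    by simp
qed

theorem mainTheorem3:
  fixes H :: "(complex^'n::finite^'n) set" and u :: "complex^'n^'n"
  assumes "is_subgroup_SL H" and "irreducible_SL H" and "u \<in> U_n H"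
  shows "(u \<notin> centre_SL \<longrightarrow> trace u = 0) \<and>
         (\<forall>k::nat. u = mat (xi TYPE('n) ^ k) \<longrightarrow> trace u = of_nat CARD('n) * xi TYPE('n) ^ k)"
proof (intro conjI impI allI)
  fix k :: nat assume "u = mat (xi TYPE('n) ^ k)"
  then show "trace u = of_nat CARD('n) * xi TYPE('n) ^ k"
    by (simp add: trace_mat)
next
  assume "u \<notin> centre_SL"
  have "det u = 1" and commutators: "\<forall>h\<in>H. u ** h ** matrix_inv u ** matrix_inv h \<in> centre_SL"
    using assms(3) by (auto simp: U_n_def SL_def)
  obtain h where "h \<in> H" "u ** h \<noteq> h ** u"
    using irreducible_SL_noncentral_not_commuting[OF assms(2) \<open>det u = 1\<close> \<open>u \<notin> centre_SL\<close>]
    by blast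
  then obtain k where "u ** h ** matrix_inv u ** matrix_inv h = mat (xi TYPE('n) ^ k)"
    using commutators unfolding centre_SL_def by blast
  moreover have "invertible u" "invertible h"
    using \<open>det u = 1\<close> \<open>h \<in> H\<close> assms(1) by (auto simp: invertible_det_nz is_subgroup_SL_def SL_def)
  ultimately have twisted: "u ** h = mat (xi TYPE('n) ^ k) ** h ** u"
    using commute_up_to_scalar_if_commutator by blast
  with \<open>u ** h \<noteq> h ** u\<close> have "xi TYPE('n) ^ k \<noteq> 1"
    by auto
  with \<open>invertible h\<close> twisted show "trace u = 0"
    by (rule trace_eq_0_if_commute_up_to_scalar)
qed

end
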